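(* Let $n\ge2$ and let $S_N.o$ be the Lie hypersurface of $G_2^\ast(\mathbb{R}^{n+3})$ described below, identified with the Lie group $S_N$ with the induced left-invariant metric. Equip it with the almost contact metric structure induced from the Kähler structure: $\xi=-JN$, $\eta=\langle\cdot,\xi\rangle$, $\varphi X=JX-\eta(X)N$, induced metric. Then $(S_N.o,\eta,\xi,\varphi,\langle,\rangle)$ is a contact metric manifold, i.e. $\Phi=d\eta$ where $\Phi(X,Y)=\langle X,\varphi Y\rangle$.
   Context: Identify $G_2^\ast(\mathbb{R}^{n+3})=\mathrm{SO}_0(2,n+1)/(\mathrm{SO}(2)\times\mathrm{SO}(n+1))$, with the invariant Kähler metric normalized to minimal sectional curvature $-8$, with the simply-connected Lie group $S$ whose Lie algebra $\mathfrak{s}$ has orthonormal basis $A_1,A_2,X_0,Y_1,\dots,Y_{n-1},Z_1,\dots,Z_{n-1},W_0$, nonzero brackets (with $c=2\sqrt2$) $[A_1,X_0]=cX_0$, $[A_1,Y_i]=-(c/2)Y_i$, $[A_1,Z_i]=(c/2)Z_i$, $[A_2,Y_i]=(c/2)Y_i$, $[A_2,Z_i]=(c/2)Z_i$, $[A_2,W_0]=cW_0$, $[X_0,Y_i]=cZ_i$, $[Y_i,Z_i]=cW_0$, left-invariant metric making the basis orthonormal and left-invariant complex structure $J$ with $J(A_1)=-X_0$, $J(A_2)=W_0$, $J(Y_i)=Z_i$, $J^2=-\mathrm{id}$. Let $N=\frac1{\sqrt2}(-A_1-A_2)$, $\mathfrak{s}_N=\mathfrak{s}\ominus\mathbb{R}N$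 (a subalgebra), $S_N$ the connected subgroup of $S$ with Lie algebra $\mathfrak{s}_N$, and $S_N.o$ its orbit through the identity $o$, a real hypersurface with left-invariant unit normal $N$. Here $d\eta(X,Y)=\tfrac12(X\eta(Y)-Y\eta(X)-\eta([X,Y]))$. *)

theory Defs
  imports Complex_Main
begin

text \<open>Labels of the orthonormal basis A1, A2, X0, Y_i, Z_i (1 \<le> i \<le> n-1), W0 of the
  solvable Lie algebra s identified with the tangent space of G_2^*(R^(n+3)).\<close>
datatype blab = A1 | A2 | X0 | Y nat | Z nat | W0

definition valid :: "nat \<Rightarrow> blab set" where
  "valid n = {A1, A2, X0, W0} \<union> Y ` {1..n-1} \<union> Z ` {1..n-1}"

definition svec :: "nat \<Rightarrow> (blab \<Rightarrow> real) set" where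
  "svec n = {u. \<forall>b. b \<notin> valid n \<longrightarrow> u b = 0}"

definition sc :: "real \<Rightarrow> blab \<Rightarrow> blab \<Rightarrow> real" where
  "sc r a = (\<lambda>e. if e = a then r else 0)"

definition cc :: real where "cc = 2 * sqrt 2"

text \<open>The listed nonzero brackets [a,b] of basis vectors (one orientation).\<close>
fun bb0 :: "blab \<Rightarrow> blab \<Rightarrow> blab \<Rightarrow> real" where
  "bb0 A1 X0 = sc cc X0"
| "bb0 A1 (Y i) = sc (-(cc/2)) (Y i)"
| "bb0 A1 (Z i) = sc (cc/2) (Z i)"
| "bb0 A2 (Y i) = sc (cc/2) (Y i)"
| "bb0 A2 (Z i) = sc (cc/2) (Z i)"
| "bb0 A2 W0 = sc cc W0"
| "bb0 X0 (Y i) = sc cc (Z i)"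
| "bb0 (Y i) (Z j) = (if i = j then sc cc W0 else (\<lambda>_. 0))"
| "bb0 _ _ = (\<lambda>_. 0)"

definition bb :: "blab \<Rightarrow> blab \<Rightarrow> blab \<Rightarrow> real" where
  "bb a b = (\<lambda>e. bb0 a b e - bb0 b a e)"

definition lie :: "nat \<Rightarrow> (blab \<Rightarrow> real) \<Rightarrow> (blab \<Rightarrow> real) \<Rightarrow> blab \<Rightarrow> real" where
  "lie n u v = (\<lambda>e. \<Sum>a\<in>valid n. \<Sum>b\<in>valid n. u a * v b * bb a b e)"

text \<open>Left-invariant metric: the basis is orthonormal.\<close>
definition sinner :: "nat \<Rightarrow> (blab \<Rightarrow> real) \<Rightarrow> (blab \<Rightarrow> real) \<Rightarrow> real" where
  "sinner n u v = (\<Sum>a\<in>valid n. u a * v a)"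

text \<open>Complex structure: J A1 = -X0, J X0 = A1, J A2 = W0, J W0 = -A2, J Y_i = Z_i, J Z_i = -Y_i.\<close>
definition Jmap :: "(blab \<Rightarrow> real) \<Rightarrow> blab \<Rightarrow> real" where
  "Jmap u = (\<lambda>e. case e of A1 \<Rightarrow> u X0 | X0 \<Rightarrow> - u A1 | A2 \<Rightarrow> - u W0 | W0 \<Rightarrow> u A2
                        | Y i \<Rightarrow> - u (Z i) | Z i \<Rightarrow> u (Y i))"

definition Nvec :: "blab \<Rightarrow> real" where
  "Nvec = (\<lambda>e. if e = A1 \<or> e = A2 then - 1 / sqrt 2 else 0)"

definition xi :: "blab \<Rightarrow> real" where
  "xi = (\<lambda>e. - Jmap Nvec e)"

definition eta :: "nat \<Rightarrow> (blab \<Rightarrow> real) \<Rightarrow> real" where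
  "eta n X = sinner n X xi"

definition phi :: "nat \<Rightarrow> (blab \<Rightarrow> real) \<Rightarrow> blab \<Rightarrow> real" where
  "phi n X = (\<lambda>e. Jmap X e - eta n X * Nvec e)"

text \<open>s_N = s \<ominus> R N: the Lie algebra of S_N, i.e. the left-invariant vector fields on S_N.o.\<close>
definition sN :: "nat \<Rightarrow> (blab \<Rightarrow> real) set" where
  "sN n = {X \<in> svec n. sinner n X Nvec = 0}"

definition fund2 :: "nat \<Rightarrow> (blab \<Rightarrow> real) \<Rightarrow> (blab \<Rightarrow> real) \<Rightarrow> real" where
  "fund2 n U V = sinner n U (phi n V)"

text \<open>d eta(X,Y) = 1/2 (X eta(Y) - Y eta(X) - eta([X,Y])) evaluated on left-invariant
  vector fields X, Y: eta(X), eta(Y) are constant, so the derivative terms vanish.\<close>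
definition deta :: "nat \<Rightarrow> (blab \<Rightarrow> real) \<Rightarrow> (blab \<Rightarrow> real) \<Rightarrow> real" where
  "deta n U V = (1/2) * (0 - 0 - eta n (lie n U V))"

end

theory Submission
  imports Defs
begin

text \<open>The only brackets with a component along X0 or W0 are \<open>[A1,X0]\<close>, \<open>[A2,W0]\<close> and
  \<open>[Y_i,Z_i]\<close>, all with coefficient \<open>c\<close>, and J pairs exactly these basis vectors. Since
  \<open>\<xi> = (W0 - X0)/\<surd>2\<close> and \<open>c/(2\<surd>2) = 1\<close>, this gives \<open>\<langle>U, J V\<rangle> = d\<eta>(U,V)\<close> on all of s.
  On \<open>s_N = N\<^sup>\<bottom>\<close> the term \<open>\<eta>(V) \<langle>U, N\<rangle>\<close> of \<open>\<Phi>(U,V)\<close> vanishes, so \<open>\<Phi> = d\<eta>\<close> there.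
  Nothing depends on \<open>n \<ge> 2\<close>.\<close>

lemma sum_valid:
  "(\<Sum>a\<in>valid n. g a) = g A1 + g A2 + g X0 + g W0 + (\<Sum>i\<in>{1..n-1}. g (Y i)) + (\<Sum>i\<in>{1..n-1}. g (Z i))"
proof -
  have "valid n = {A1, A2, X0, W0} \<union> (Y ` {1..n-1} \<union> Z ` {1..n-1})"
    unfolding valid_def by auto
  then have "(\<Sum>a\<in>valid n. g a)
      = (\<Sum>a\<in>{A1, A2, X0, W0}. g a) + (\<Sum>a\<in>Y ` {1..n-1} \<union> Z ` {1..n-1}. g a)"
    by (simp only:) (rule sum.union_disjoint, auto)
  also have "(\<Sum>a\<in>Y ` {1..n-1} \<union> Z ` {1..n-1}. g a)
      = (\<Sum>i\<in>{1..n-1}. g (Y i)) + (\<Sum>i\<in>{1..n-1}. g (Z i))"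
    by (subst sum.union_disjoint) (auto simp: sum.reindex inj_on_def)
  finally show ?thesis by (simp add: add.assoc)
qed

lemma lie_X0_component: "lie n U V X0 = cc * (U A1 * V X0 - U X0 * V A1)"
  unfolding lie_def sum_valid
  by (simp add: bb_def sc_def if_distribR if_distrib[of "times _"] if_distrib[of uminus]
      sum.delta algebra_simps cong: if_cong)

lemma lie_W0_component: "lie n U V W0 = cc * (U A2 * V W0 - U W0 * V A2)
   + cc * (\<Sum>i\<in>{1..n-1}. U (Y i) * V (Z i) - U (Z i) * V (Y i))"
  unfolding lie_def sum_valid
  by (simp add: bb_def sc_def if_distribR if_distrib[of "times _"] if_distrib[of uminus]
      sum.delta sum.delta' algebra_simps sum.distrib[symmetric] sum_subtractf[symmetric]
      sum_distrib_left[symmetric] cong: if_cong)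
    (auto simp: sum_distrib_left sum_subtractf sum_negf algebra_simps intro!: sum.cong)

lemma sinner_Jmap_expand: "sinner n U (Jmap V) = U A1 * V X0 - U X0 * V A1 - U A2 * V W0 + U W0 * V A2
   - (\<Sum>i\<in>{1..n-1}. U (Y i) * V (Z i) - U (Z i) * V (Y i))"
  unfolding sinner_def sum_valid by (simp add: Jmap_def sum_subtractf sum_negf algebra_simps)

lemma eta_eq_coords: "eta n X = (X W0 - X X0) / sqrt 2"
  unfolding eta_def sinner_def sum_valid xi_def Jmap_def Nvec_def by (simp add: field_simps)

lemma fund2_eq_sinner_Jmap_minus: "fund2 n U V = sinner n U (Jmap V) - eta n V * sinner n U Nvec"
  unfolding fund2_def phi_def sinner_def by (simp add: algebra_simps sum_subtractf sum_distrib_left)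

lemma deta_eq_lie_coords: "deta n U V = (lie n U V X0 - lie n U V W0) / (2 * sqrt 2)"
  unfolding deta_def eta_eq_coords by (simp add: field_simps)

lemma sinner_Jmap_eq_deta: "sinner n U (Jmap V) = deta n U V"
  unfolding deta_eq_lie_coords lie_X0_component lie_W0_component sinner_Jmap_expand cc_def by (simp add: field_simps)

theorem proposition5p5:
  fixes n :: nat
  assumes "2 \<le> n"
  shows "\<forall>U\<in>sN n. \<forall>V\<in>sN n. fund2 n U V = deta n U V"
proof (intro ballI)
  fix U V assume "U \<in> sN n" "V \<in> sN n"
  then have "sinner n U Nvec = 0" by (simp add: sN_def)
  then have "fund2 n U V = sinner n U (Jmap V)"
    by (simp add: fund2_eq_sinner_Jmap_minus)
  also have "\<dots> = deta n U V"
    by (rule sinner_Jmap_eq_deta)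
  finally show "fund2 n U V = deta n U V" .
qed

end
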